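(* For every $i\in\{1,\dots,n\}$, the control input $v_i(\mathbf p)=\mathrm{sat}(v_i^{\mathrm{ms}}(\mathbf p)+v_i^{\mathrm{cv}}(\mathbf p))$ is locally Lipschitz with respect to $\mathbf p$ on $\mathbb{R}^{dn}$.
   Context: Setting: $n\ge2$ robots in $\mathbb{R}^d$, positions $p_i\in\mathbb{R}^d$, configuration $\mathbf p=[p_1^\top,\dots,p_n^\top]^\top\in\mathbb{R}^{dn}$; fixed sample points $q_1,\dots,q_m\in\mathbb{R}^d$; constants $\beta>0$, $\sigma_1>0$, $\sigma_2>0$, $\varepsilon\in(0,1)$, $r_{\mathrm{avoid}}>0$, $v_{\max}>0$. Mass: $P_k(\mathbf p)=\frac1n\sum_{i=1}^n e^{-\beta\|q_k-p_i\|^2}$. Meanshift command: $v_i^{\mathrm{ms}}(\mathbf p)=\dfrac{\frac{\sigma_1}{m}\sum_{k=1}^m P_k(\mathbf p)^{-1}e^{-\beta\|q_k-p_i\|^2}(q_k-p_i)}{\sum_{k=1}^m P_k(\mathbf p)^{-1}e^{-\beta\|q_k-p_i\|^2}}$. Repulsive term: $\tilde v_i^{\mathrm{cv}}=\sigma_2\sum_{j\ne i,\ \|p_i-p_j\|\le r_{\mathrm{avoid}}}\frac{r_{\mathrm{avoid}}-\|p_i-p_j\|}{\|p_i-p_j\|+\varepsilon}(p_i-p_j)$. With $\varphi=\min\{\|v_i^{\mathrm{ms}}\|^2/\varepsilon,1\}$, the gain is $\kappa_2=\varphi$ if $(v_i^{\mathrm{ms}})^\top\tilde v_i^{\mathrm{cv}}\ge0$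 and $\kappa_2=\varphi\min\{-(1-\varepsilon)\|v_i^{\mathrm{ms}}\|^2/((v_i^{\mathrm{ms}})^\top\tilde v_i^{\mathrm{cv}}),1\}$ if $(v_i^{\mathrm{ms}})^\top\tilde v_i^{\mathrm{cv}}<0$; collision-avoidance command $v_i^{\mathrm{cv}}=\kappa_2\tilde v_i^{\mathrm{cv}}$. Saturation: $\mathrm{sat}(z)=v_{\max}z/\|z\|$ if $\|z\|>v_{\max}$, and $\mathrm{sat}(z)=z$ otherwise. *)

theory Defs
  imports "HOL-Analysis.Analysis"
begin

text \<open>Robots are indexed by a finite type 'n (n = CARD('n)), positions live in
  real^'d (d = CARD('d)); a configuration is p :: real^'d^'n, i.e. an element of R^{dn}
  with the Euclidean norm.  Sample points are indexed by a finite type 'k (m = CARD('k)).\<close>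

definition locally_lipschitz_on :: "'a::metric_space set \<Rightarrow> ('a \<Rightarrow> 'b::metric_space) \<Rightarrow> bool" where
  "locally_lipschitz_on X f \<longleftrightarrow>
     (\<forall>x\<in>X. \<exists>u>0. \<exists>L. L-lipschitz_on (cball x u \<inter> X) f)"

definition mass :: "real \<Rightarrow> ('k::finite \<Rightarrow> real^'d) \<Rightarrow> real^'d^'n::finite \<Rightarrow> 'k \<Rightarrow> real" where
  "mass \<beta> q p k = (1 / real CARD('n)) * (\<Sum>i\<in>UNIV. exp (- \<beta> * (norm (q k - p $ i))\<^sup>2))"

definition v_ms :: "real \<Rightarrow> real \<Rightarrow> ('k::finite \<Rightarrow> real^'d) \<Rightarrow> real^'d^'n::finite \<Rightarrow> 'n \<Rightarrow> real^'d" where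
  "v_ms \<beta> \<sigma>1 q p i =
     (let w = (\<lambda>k. inverse (mass \<beta> q p k) * exp (- \<beta> * (norm (q k - p $ i))\<^sup>2))
      in (1 / (\<Sum>k\<in>UNIV. w k)) *\<^sub>R ((\<sigma>1 / real CARD('k)) *\<^sub>R (\<Sum>k\<in>UNIV. w k *\<^sub>R (q k - p $ i))))"

definition v_rep :: "real \<Rightarrow> real \<Rightarrow> real \<Rightarrow> real^'d^'n::finite \<Rightarrow> 'n \<Rightarrow> real^'d" where
  "v_rep \<sigma>2 \<epsilon> r_avoid p i =
     \<sigma>2 *\<^sub>R (\<Sum>j\<in>{j. j \<noteq> i \<and> norm (p $ i - p $ j) \<le> r_avoid}.
        ((r_avoid - norm (p $ i - p $ j)) / (norm (p $ i - p $ j) + \<epsilon>)) *\<^sub>R (p $ i - p $ j))"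

definition kappa2 :: "real \<Rightarrow> real^'d \<Rightarrow> real^'d \<Rightarrow> real" where
  "kappa2 \<epsilon> vms vt =
     (let \<phi> = min ((norm vms)\<^sup>2 / \<epsilon>) 1
      in if vms \<bullet> vt \<ge> 0 then \<phi>
         else \<phi> * min (- (1 - \<epsilon>) * (norm vms)\<^sup>2 / (vms \<bullet> vt)) 1)"

definition v_cv :: "real \<Rightarrow> real \<Rightarrow> real \<Rightarrow> real \<Rightarrow> real \<Rightarrow> ('k::finite \<Rightarrow> real^'d)
    \<Rightarrow> real^'d^'n::finite \<Rightarrow> 'n \<Rightarrow> real^'d" where
  "v_cv \<beta> \<sigma>1 \<sigma>2 \<epsilon> r_avoid q p i =
     kappa2 \<epsilon> (v_ms \<beta> \<sigma>1 q p i) (v_rep \<sigma>2 \<epsilon> r_avoid p i) *\<^sub>R v_rep \<sigma>2 \<epsilon> r_avoid p i"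

definition sat :: "real \<Rightarrow> real^'d \<Rightarrow> real^'d" where
  "sat v_max z = (if norm z > v_max then (v_max / norm z) *\<^sub>R z else z)"

definition control :: "real \<Rightarrow> real \<Rightarrow> real \<Rightarrow> real \<Rightarrow> real \<Rightarrow> real \<Rightarrow> ('k::finite \<Rightarrow> real^'d)
    \<Rightarrow> real^'d^'n::finite \<Rightarrow> 'n \<Rightarrow> real^'d" where
  "control \<beta> \<sigma>1 \<sigma>2 \<epsilon> r_avoid v_max q p i =
     sat v_max (v_ms \<beta> \<sigma>1 q p i + v_cv \<beta> \<sigma>1 \<sigma>2 \<epsilon> r_avoid q p i)"

end

theory Submission
  imports Defs
begin

text \<open>Local Lipschitz continuity is preserved by sums, bounded bilinear maps, composition,
  pairing and domination of distances, and holds for \<open>exp\<close> and \<open>inverse\<close> away from 0 by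
  the mean value theorem. This covers the mass, the meanshift command, the saturation and the
  repulsive term, whose state-dependent index set is absorbed by clamping
  \<open>r_avoid - \<parallel>p_i - p_j\<parallel>\<close> at 0. The only delicate factor is the gain \<open>\<kappa>\<^sub>2\<close>: with
  \<open>N = \<parallel>v_ms\<parallel>\<^sup>2\<close> and \<open>c = 1 - \<epsilon>\<close> it equals \<open>min (N/\<epsilon>) 1 \<cdot> c N / max (-v_ms\<bullet>v_rep) (c N)\<close>
  (for \<open>N = 0\<close> the quotient is \<open>0/0 = 0\<close>). The quotient is bounded but not Lipschitz where
  \<open>N\<close> vanishes, yet \<open>N\<close> times its variation is controlled by the variations of \<open>N\<close> and of the
  denominator, and the prefactor is at most \<open>N/\<epsilon>\<close>.\<close>

lemma lipschitz_on_imp_locally_lipschitz_on: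
  "L-lipschitz_on X f \<Longrightarrow> locally_lipschitz_on X f"
  unfolding locally_lipschitz_on_def by (meson inf_le2 lipschitz_on_subset zero_less_one)

lemma locally_lipschitz_onE:
  assumes "locally_lipschitz_on X f" "x \<in> X"
  obtains u L where "u > 0" "L-lipschitz_on (cball x u \<inter> X) f"
  using assms unfolding locally_lipschitz_on_def by blast

lemma locally_lipschitz_on_const: "locally_lipschitz_on X (\<lambda>x. c)"
  by (rule lipschitz_on_imp_locally_lipschitz_on[OF lipschitz_on_constant])

lemma locally_lipschitz_on_ident: "locally_lipschitz_on X (\<lambda>x. x)"
  by (rule lipschitz_on_imp_locally_lipschitz_on[OF lipschitz_on_id])

lemma locally_lipschitz_on_compose:
  assumes f: "locally_lipschitz_on X f" and g: "locally_lipschitz_on Y g" and "f ` X \<subseteq> Y"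
  shows "locally_lipschitz_on X (\<lambda>x. g (f x))"
  unfolding locally_lipschitz_on_def
proof
  fix x assume "x \<in> X"
  obtain u L where u: "u > 0" and fL: "L-lipschitz_on (cball x u \<inter> X) f"
    using f \<open>x \<in> X\<close> by (rule locally_lipschitz_onE)
  obtain v M where v: "v > 0" and gM: "M-lipschitz_on (cball (f x) v \<inter> Y) g"
    using g \<open>x \<in> X\<close> \<open>f ` X \<subseteq> Y\<close> by (blast elim: locally_lipschitz_onE)
  have L: "L \<ge> 0" using fL by (rule lipschitz_on_nonneg)
  define r where "r = min u (v / (L + 1))"
  have r: "r > 0" using u v L by (simp add: r_def)
  have fL': "L-lipschitz_on (cball x r \<inter> X) f"
    by (rule lipschitz_on_subset[OF fL]) (auto simp: r_def)
  have "f y \<in> cball (f x) v" if y: "y \<in> cball x r \<inter> X" for y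
  proof -
    have "dist (f x) (f y) \<le> L * dist x y"
      using lipschitz_onD[OF fL'] y \<open>x \<in> X\<close> r by simp
    also have "\<dots> \<le> L * (v / (L + 1))"
      using y L by (intro mult_left_mono) (auto simp: r_def)
    also have "\<dots> \<le> v" using L v by (simp add: field_simps)
    finally show ?thesis by simp
  qed
  then have "f ` (cball x r \<inter> X) \<subseteq> cball (f x) v \<inter> Y"
    using \<open>f ` X \<subseteq> Y\<close> by blast
  then have "(M * L)-lipschitz_on (cball x r \<inter> X) (\<lambda>x. g (f x))"
    by (intro lipschitz_on_compose2 fL' lipschitz_on_subset[OF gM])
  then show "\<exists>u>0. \<exists>L. L-lipschitz_on (cball x u \<inter> X) (\<lambda>x. g (f x))"
    using r by blast
qed

lemma locally_lipschitz_on_Pair: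
  assumes f: "locally_lipschitz_on X f" and g: "locally_lipschitz_on X g"
  shows "locally_lipschitz_on X (\<lambda>x. (f x, g x))"
  unfolding locally_lipschitz_on_def
proof
  fix x assume "x \<in> X"
  obtain u L where u: "u > 0" and fL: "L-lipschitz_on (cball x u \<inter> X) f"
    using f \<open>x \<in> X\<close> by (rule locally_lipschitz_onE)
  obtain v M where v: "v > 0" and gM: "M-lipschitz_on (cball x v \<inter> X) g"
    using g \<open>x \<in> X\<close> by (rule locally_lipschitz_onE)
  have "cball x (min u v) \<inter> X \<subseteq> cball x u \<inter> X" "cball x (min u v) \<inter> X \<subseteq> cball x v \<inter> X"
    by auto
  then have "(sqrt (L\<^sup>2 + M\<^sup>2))-lipschitz_on (cball x (min u v) \<inter> X) (\<lambda>x. (f x, g x))"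
    by (intro lipschitz_on_Pair lipschitz_on_subset[OF fL] lipschitz_on_subset[OF gM])
  then show "\<exists>u>0. \<exists>L. L-lipschitz_on (cball x u \<inter> X) (\<lambda>x. (f x, g x))"
    using u v by (intro exI[of _ "min u v"]) auto
qed

lemma locally_lipschitz_on_dominated:
  assumes g: "locally_lipschitz_on X g"
    and dominated: "\<And>y z. y \<in> X \<Longrightarrow> z \<in> X \<Longrightarrow> dist (f y) (f z) \<le> C * dist (g y) (g z)"
  shows "locally_lipschitz_on X f"
  unfolding locally_lipschitz_on_def
proof
  fix x assume "x \<in> X"
  obtain u L where u: "u > 0" and gL: "L-lipschitz_on (cball x u \<inter> X) g"
    using g \<open>x \<in> X\<close> by (rule locally_lipschitz_onE)
  have "(max C 0 * L)-lipschitz_on (cball x u \<inter> X) f"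
  proof (rule lipschitz_onI)
    fix y z assume yz: "y \<in> cball x u \<inter> X" "z \<in> cball x u \<inter> X"
    have "dist (f y) (f z) \<le> max C 0 * dist (g y) (g z)"
      using dominated[of y z] yz mult_right_mono[of C "max C 0" "dist (g y) (g z)"] by auto
    also have "\<dots> \<le> max C 0 * (L * dist y z)"
      using lipschitz_onD[OF gL yz] by (intro mult_left_mono) auto
    finally show "dist (f y) (f z) \<le> max C 0 * L * dist y z" by simp
  qed (use lipschitz_on_nonneg[OF gL] in simp)
  then show "\<exists>u>0. \<exists>L. L-lipschitz_on (cball x u \<inter> X) f" using u by blast
qed

lemma dist_add_dist_le_dist_Pair: "dist a c + dist b d \<le> 2 * dist (a, b) (c, d)"
  using dist_fst_le[of "(a, b)" "(c, d)"] dist_snd_le[of "(a, b)" "(c, d)"] by simp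

lemma locally_lipschitz_on_add:
  fixes f g :: "'a::metric_space \<Rightarrow> 'b::real_normed_vector"
  assumes "locally_lipschitz_on X f" "locally_lipschitz_on X g"
  shows "locally_lipschitz_on X (\<lambda>x. f x + g x)"
  by (rule locally_lipschitz_on_dominated[OF locally_lipschitz_on_Pair[OF assms], where C = 2])
     (meson dist_triangle_add dist_add_dist_le_dist_Pair order_trans)

lemma locally_lipschitz_on_minus:
  fixes f :: "'a::metric_space \<Rightarrow> 'b::real_normed_vector"
  assumes "locally_lipschitz_on X f"
  shows "locally_lipschitz_on X (\<lambda>x. - f x)"
  by (rule locally_lipschitz_on_dominated[OF assms, where C = 1]) (simp add: dist_minus)

lemma locally_lipschitz_on_diff:
  fixes f g :: "'a::metric_space \<Rightarrow> 'b::real_normed_vector"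
  assumes "locally_lipschitz_on X f" "locally_lipschitz_on X g"
  shows "locally_lipschitz_on X (\<lambda>x. f x - g x)"
  using locally_lipschitz_on_add[OF assms(1) locally_lipschitz_on_minus[OF assms(2)]] by simp

lemma locally_lipschitz_on_sum:
  fixes f :: "'i \<Rightarrow> 'a::metric_space \<Rightarrow> 'b::real_normed_vector"
  assumes "\<And>j. j \<in> J \<Longrightarrow> locally_lipschitz_on X (f j)"
  shows "locally_lipschitz_on X (\<lambda>x. \<Sum>j\<in>J. f j x)"
  using assms
  by (induction J rule: infinite_finite_induct)
     (auto intro: locally_lipschitz_on_const locally_lipschitz_on_add)

lemma locally_lipschitz_on_norm:
  fixes f :: "'a::metric_space \<Rightarrow> 'b::real_normed_vector"
  assumes "locally_lipschitz_on X f"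
  shows "locally_lipschitz_on X (\<lambda>x. norm (f x))"
  by (rule locally_lipschitz_on_dominated[OF assms, where C = 1])
     (simp add: dist_real_def dist_norm norm_triangle_ineq3)

lemma locally_lipschitz_on_vec_nth:
  assumes "locally_lipschitz_on X f"
  shows "locally_lipschitz_on X (\<lambda>x. f x $ i)"
  by (rule locally_lipschitz_on_dominated[OF assms, where C = 1]) (simp add: dist_vec_nth_le)

lemma locally_lipschitz_on_max:
  fixes f g :: "'a::metric_space \<Rightarrow> real"
  assumes "locally_lipschitz_on X f" "locally_lipschitz_on X g"
  shows "locally_lipschitz_on X (\<lambda>x. max (f x) (g x))"
  by (rule locally_lipschitz_on_dominated[OF locally_lipschitz_on_Pair[OF assms], where C = 2])
     (rule order_trans[OF _ dist_add_dist_le_dist_Pair], auto simp: dist_real_def max_def)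

lemma bounded_bilinear_locally_lipschitz_on:
  assumes "bounded_bilinear bop"
  shows "locally_lipschitz_on X (\<lambda>z. bop (fst z) (snd z))"
  unfolding locally_lipschitz_on_def
proof
  fix z0 assume "z0 \<in> X"
  obtain K where K: "K > 0" "\<And>a b. norm (bop a b) \<le> norm a * norm b * K"
    using bounded_bilinear.pos_bounded[OF assms] by blast
  define R where "R = norm z0 + 1"
  have R: "norm (fst z) \<le> R" "norm (snd z) \<le> R" if "z \<in> cball z0 1" for z
    using that norm_fst_le[of "fst z" "snd z"] norm_snd_le[of "snd z" "fst z"]
      norm_triangle_ineq2[of z z0]
    by (auto simp: R_def dist_norm norm_minus_commute)
  have "(2 * K * R)-lipschitz_on (cball z0 1 \<inter> X) (\<lambda>z. bop (fst z) (snd z))"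
  proof (rule lipschitz_onI)
    fix y z assume "y \<in> cball z0 1 \<inter> X" "z \<in> cball z0 1 \<inter> X"
    then have y: "norm (snd y) \<le> R" and z: "norm (fst z) \<le> R"
      using R by auto
    have "bop (fst y) (snd y) - bop (fst z) (snd z)
        = bop (fst y - fst z) (snd y) + bop (fst z) (snd y - snd z)"
      by (simp add: bounded_bilinear.diff_left[OF assms] bounded_bilinear.diff_right[OF assms])
    then have "dist (bop (fst y) (snd y)) (bop (fst z) (snd z))
        \<le> norm (bop (fst y - fst z) (snd y)) + norm (bop (fst z) (snd y - snd z))"
      by (simp add: dist_norm norm_triangle_ineq)
    also have "\<dots> \<le> K * R * dist (fst y) (fst z) + K * R * dist (snd y) (snd z)"
      using K y z by (intro add_mono) (auto simp: dist_norm mult.commute mult.left_commute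
          intro!: order_trans[OF K(2)] mult_left_mono mult_right_mono)
    also have "\<dots> \<le> 2 * K * R * dist y z"
      using mult_left_mono[OF dist_add_dist_le_dist_Pair[of "fst y" "fst z" "snd y" "snd z"],
          of "K * R"] K by (simp add: algebra_simps R_def add_nonneg_pos)
    finally show "dist (bop (fst y) (snd y)) (bop (fst z) (snd z)) \<le> 2 * K * R * dist y z" .
  qed (use K in \<open>simp add: R_def add_nonneg_pos\<close>)
  then show "\<exists>u>0. \<exists>L. L-lipschitz_on (cball z0 u \<inter> X) (\<lambda>z. bop (fst z) (snd z))"
    by (intro exI[of _ 1]) auto
qed

lemma locally_lipschitz_on_bilinear:
  assumes "bounded_bilinear bop" "locally_lipschitz_on X f" "locally_lipschitz_on X g"
  shows "locally_lipschitz_on X (\<lambda>x. bop (f x) (g x))"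
  using locally_lipschitz_on_compose[OF locally_lipschitz_on_Pair[OF assms(2,3)]
      bounded_bilinear_locally_lipschitz_on[OF assms(1), of UNIV]]
  by simp

lemmas locally_lipschitz_on_scaleR = locally_lipschitz_on_bilinear[OF bounded_bilinear_scaleR]
lemmas locally_lipschitz_on_mult = locally_lipschitz_on_bilinear[OF bounded_bilinear_mult]
lemmas locally_lipschitz_on_inner = locally_lipschitz_on_bilinear[OF bounded_bilinear_inner]

lemma continuous_deriv_imp_locally_lipschitz_on:
  fixes f :: "real \<Rightarrow> real"
  assumes "open S" and deriv: "\<And>x. x \<in> S \<Longrightarrow> (f has_real_derivative f' x) (at x)"
    and "continuous_on S f'"
  shows "locally_lipschitz_on S f"
  unfolding locally_lipschitz_on_def
proof
  fix x assume "x \<in> S"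
  then obtain u where u: "u > 0" "cball x u \<subseteq> S"
    using \<open>open S\<close> open_contains_cball by blast
  have "compact (f' ` cball x u)"
    using u by (intro compact_continuous_image continuous_on_subset[OF \<open>continuous_on S f'\<close>]) auto
  then obtain B where B: "\<And>y. y \<in> cball x u \<Longrightarrow> norm (f' y) \<le> B"
    by (meson compact_imp_bounded bounded_iff imageI)
  have deriv_within: "(f has_real_derivative f' y) (at y within cball x u)" if "y \<in> cball x u" for y
    using that u deriv by (blast intro: has_field_derivative_at_within)
  have "B-lipschitz_on (cball x u \<inter> S) f"
  proof (rule lipschitz_onI)
    fix y z assume "y \<in> cball x u \<inter> S" "z \<in> cball x u \<inter> S"
    then show "dist (f y) (f z) \<le> B * dist y z"
      unfolding dist_norm by (intro field_differentiable_bound[OF convex_cball deriv_within B]) auto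
  qed (use B u in \<open>meson centre_in_cball less_imp_le norm_ge_zero order_trans\<close>)
  then show "\<exists>u>0. \<exists>L. L-lipschitz_on (cball x u \<inter> S) f" using u by blast
qed

lemma locally_lipschitz_on_exp:
  assumes "locally_lipschitz_on X f"
  shows "locally_lipschitz_on X (\<lambda>x. exp (f x) :: real)"
proof (rule locally_lipschitz_on_compose[OF assms _ subset_UNIV])
  show "locally_lipschitz_on UNIV (exp :: real \<Rightarrow> real)"
    by (rule continuous_deriv_imp_locally_lipschitz_on[where f' = exp])
       (auto intro: DERIV_exp continuous_on_exp continuous_on_id)
qed

lemma locally_lipschitz_on_inverse:
  fixes f :: "'a::metric_space \<Rightarrow> real"
  assumes "locally_lipschitz_on X f" "\<And>x. x \<in> X \<Longrightarrow> f x \<noteq> 0"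
  shows "locally_lipschitz_on X (\<lambda>x. inverse (f x))"
proof (rule locally_lipschitz_on_compose[OF assms(1)])
  show "locally_lipschitz_on (- {0}) (inverse :: real \<Rightarrow> real)"
    by (rule continuous_deriv_imp_locally_lipschitz_on[where f' = "\<lambda>x. - (inverse x ^ 2)"])
       (auto intro!: derivative_eq_intros continuous_intros simp: power2_eq_square)
qed (use assms(2) in auto)

lemma locally_lipschitz_on_divide:
  fixes f g :: "'a::metric_space \<Rightarrow> real"
  assumes "locally_lipschitz_on X f" "locally_lipschitz_on X g" "\<And>x. x \<in> X \<Longrightarrow> g x \<noteq> 0"
  shows "locally_lipschitz_on X (\<lambda>x. f x / g x)"
  using locally_lipschitz_on_mult[OF assms(1) locally_lipschitz_on_inverse[OF assms(2,3)]]
  by (simp add: divide_inverse)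

lemma locally_lipschitz_on_power2:
  fixes f :: "'a::metric_space \<Rightarrow> real"
  assumes "locally_lipschitz_on X f"
  shows "locally_lipschitz_on X (\<lambda>x. (f x)\<^sup>2)"
  unfolding power2_eq_square by (intro locally_lipschitz_on_mult assms)

lemma min_divide_one_eq:
  fixes x t :: real
  assumes "0 < x" "0 < t"
  shows "min (x / t) 1 = x / max t x"
  using assms by (auto simp: min_def max_def field_simps)

lemma kappa2_eq:
  fixes a b :: "real^'d"
  assumes "\<epsilon> < 1"
  shows "kappa2 \<epsilon> a b = min ((norm a)\<^sup>2 / \<epsilon>) 1 *
    ((1 - \<epsilon>) * (norm a)\<^sup>2 / max (- (a \<bullet> b)) ((1 - \<epsilon>) * (norm a)\<^sup>2))"
proof (cases "a = 0")
  case False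
  then have pos: "0 < (1 - \<epsilon>) * (norm a)\<^sup>2" using assms by simp
  show ?thesis
  proof (cases "a \<bullet> b \<ge> 0")
    case True
    then show ?thesis using pos assms by (simp add: kappa2_def max_absorb2)
  next
    case False
    have "- (1 - \<epsilon>) * (norm a)\<^sup>2 / (a \<bullet> b) = (1 - \<epsilon>) * (norm a)\<^sup>2 / - (a \<bullet> b)"
      by (simp only: divide_minus_right mult_minus_left minus_divide_left)
    then show ?thesis using False pos min_divide_one_eq[OF pos, of "- (a \<bullet> b)"]
      by (simp add: kappa2_def)
  qed
qed (simp add: kappa2_def)

lemma scaled_le_imp_pos:
  fixes c N D :: real
  shows "0 < c \<Longrightarrow> 0 \<le> N \<Longrightarrow> N \<noteq> 0 \<Longrightarrow> c * N \<le> D \<Longrightarrow> 0 < D"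
  by (metis less_eq_real_def mult_pos_pos order_less_le_trans)

lemma weighted_ratio_diff_le:
  fixes c N1 N2 D1 D2 :: real
  assumes c: "0 < c" and N: "0 \<le> N1" "0 \<le> N2" and D: "c * N1 \<le> D1" "c * N2 \<le> D2"
  shows "N2 * \<bar>c * N1 / D1 - c * N2 / D2\<bar> \<le> \<bar>N1 - N2\<bar> + \<bar>D1 - D2\<bar> / c"
proof (cases "N2 = 0")
  case False
  then have "0 < D2" by (rule scaled_le_imp_pos[OF c N(2) _ D(2)])
  have h2: "0 \<le> c * N2 / D2" "c * N2 / D2 \<le> 1" using \<open>0 < D2\<close> c N D by auto
  have h1: "0 \<le> N1 / D1 \<and> N1 / D1 \<le> 1 / c"
  proof (cases "N1 = 0")
    case False
    then have "0 < D1" by (rule scaled_le_imp_pos[OF c N(1) _ D(1)])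
    then show ?thesis using c N D by (simp add: field_simps)
  qed (use c in simp)
  have split: "N2 * (c * N1 / D1 - c * N2 / D2)
      = (c * N2 / D2) * (N1 - N2) + (c * N2 / D2) * (N1 / D1) * (D2 - D1)"
  proof (cases "D1 = 0")
    case True
    then have "N1 = 0" using c N D by (simp add: mult_le_0_iff)
    then show ?thesis using True by (simp add: algebra_simps)
  qed (use \<open>0 < D2\<close> in \<open>simp add: field_simps\<close>)
  have "N2 * \<bar>c * N1 / D1 - c * N2 / D2\<bar> = \<bar>N2 * (c * N1 / D1 - c * N2 / D2)\<bar>"
    using N by (simp add: abs_mult)
  also have "\<dots> \<le> \<bar>(c * N2 / D2) * (N1 - N2)\<bar> + \<bar>(c * N2 / D2) * (N1 / D1) * (D2 - D1)\<bar>"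
    unfolding split by (rule abs_triangle_ineq)
  also have "\<dots> = (c * N2 / D2) * \<bar>N1 - N2\<bar> + (c * N2 / D2) * (N1 / D1) * \<bar>D1 - D2\<bar>"
    using h2(1) conjunct1[OF h1]
    by (simp only: abs_mult abs_of_nonneg abs_minus_commute[of D2 D1])
  also have "\<dots> \<le> 1 * \<bar>N1 - N2\<bar> + 1 * (1 / c) * \<bar>D1 - D2\<bar>"
    using h1 h2 by (intro add_mono mult_right_mono mult_mono) auto
  finally show ?thesis by simp
qed (use assms in simp)

lemma kappa2_shape_diff_le:
  fixes \<epsilon> c N1 N2 D1 D2 :: real
  assumes e: "0 < \<epsilon>" and c: "0 < c" and N: "0 \<le> N1" "0 \<le> N2"
    and D: "c * N1 \<le> D1" "c * N2 \<le> D2"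
  shows "\<bar>min (N1 / \<epsilon>) 1 * (c * N1 / D1) - min (N2 / \<epsilon>) 1 * (c * N2 / D2)\<bar>
    \<le> (2 + 1 / c) / \<epsilon> * (\<bar>N1 - N2\<bar> + \<bar>D1 - D2\<bar>)"
proof -
  define \<phi>1 where "\<phi>1 = min (N1 / \<epsilon>) 1"
  define \<phi>2 where "\<phi>2 = min (N2 / \<epsilon>) 1"
  define h1 where "h1 = c * N1 / D1"
  define h2 where "h2 = c * N2 / D2"
  have h1: "0 \<le> h1 \<and> h1 \<le> 1"
  proof (cases "N1 = 0")
    case False
    then have "0 < D1" by (rule scaled_le_imp_pos[OF c N(1) _ D(1)])
    then show ?thesis using c N D by (simp add: h1_def field_simps)
  qed (simp add: h1_def)
  have \<phi>2: "0 \<le> \<phi>2" "\<phi>2 \<le> N2 / \<epsilon>" using e N by (auto simp: \<phi>2_def)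
  have "\<bar>\<phi>1 - \<phi>2\<bar> \<le> \<bar>N1 / \<epsilon> - N2 / \<epsilon>\<bar>" by (auto simp: \<phi>1_def \<phi>2_def min_def)
  then have \<phi>: "\<bar>\<phi>1 - \<phi>2\<bar> \<le> \<bar>N1 - N2\<bar> / \<epsilon>" using e by (simp add: diff_divide_distrib[symmetric])
  have "\<bar>\<phi>1 * h1 - \<phi>2 * h2\<bar> = \<bar>(\<phi>1 - \<phi>2) * h1 + \<phi>2 * (h1 - h2)\<bar>" by (simp add: algebra_simps)
  also have "\<dots> \<le> \<bar>\<phi>1 - \<phi>2\<bar> * h1 + \<phi>2 * \<bar>h1 - h2\<bar>"
    using h1 \<phi>2 by (simp add: abs_mult abs_triangle_ineq[THEN order_trans])
  also have "\<dots> \<le> \<bar>N1 - N2\<bar> / \<epsilon> * 1 + N2 / \<epsilon> * \<bar>h1 - h2\<bar>"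
    using h1 \<phi>2 \<phi> by (intro add_mono mult_mono) auto
  also have "N2 / \<epsilon> * \<bar>h1 - h2\<bar> \<le> (\<bar>N1 - N2\<bar> + \<bar>D1 - D2\<bar> / c) / \<epsilon>"
    using weighted_ratio_diff_le[OF c N D] e by (simp add: h1_def h2_def divide_right_mono)
  also have "\<bar>N1 - N2\<bar> / \<epsilon> * 1 + (\<bar>N1 - N2\<bar> + \<bar>D1 - D2\<bar> / c) / \<epsilon>
      \<le> (2 + 1 / c) / \<epsilon> * (\<bar>N1 - N2\<bar> + \<bar>D1 - D2\<bar>)"
    using e c by (simp add: field_simps)
  finally show ?thesis by (simp add: \<phi>1_def \<phi>2_def h1_def h2_def)
qed

lemma locally_lipschitz_on_kappa2:
  fixes a b :: "'a::metric_space \<Rightarrow> real^'d"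
  assumes "locally_lipschitz_on X a" "locally_lipschitz_on X b" and e: "0 < \<epsilon>" "\<epsilon> < 1"
  shows "locally_lipschitz_on X (\<lambda>x. kappa2 \<epsilon> (a x) (b x))"
proof -
  define c where "c = 1 - \<epsilon>"
  define N where "N x = (norm (a x))\<^sup>2" for x
  define D where "D x = max (- (a x \<bullet> b x)) (c * N x)" for x
  have c: "0 < c" using e by (simp add: c_def)
  have "locally_lipschitz_on X (\<lambda>x. (N x, D x))"
    unfolding N_def D_def
    by (intro locally_lipschitz_on_Pair locally_lipschitz_on_power2 locally_lipschitz_on_max
        locally_lipschitz_on_minus locally_lipschitz_on_mult locally_lipschitz_on_inner locally_lipschitz_on_norm
        locally_lipschitz_on_const assms)
  then show ?thesis
  proof (rule locally_lipschitz_on_dominated)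
    fix y z
    have "dist (kappa2 \<epsilon> (a y) (b y)) (kappa2 \<epsilon> (a z) (b z))
        \<le> (2 + 1 / c) / \<epsilon> * (dist (N y) (N z) + dist (D y) (D z))"
      using kappa2_shape_diff_le[OF e(1) c, of "N y" "N z" "D y" "D z"]
      by (simp add: kappa2_eq[OF e(2)] N_def D_def c_def dist_real_def)
    also have "\<dots> \<le> (2 + 1 / c) / \<epsilon> * (2 * dist (N y, D y) (N z, D z))"
      using c e by (intro mult_left_mono dist_add_dist_le_dist_Pair) auto
    finally show "dist (kappa2 \<epsilon> (a y) (b y)) (kappa2 \<epsilon> (a z) (b z))
        \<le> (2 + 1 / c) / \<epsilon> * 2 * dist (N y, D y) (N z, D z)"
      by (simp only: mult.assoc)
  qed
qed

lemma mass_pos: "0 < mass \<beta> q p k"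
  unfolding mass_def by (intro mult_pos_pos sum_pos) auto

lemma locally_lipschitz_on_mass: "locally_lipschitz_on X (\<lambda>p. mass \<beta> q p k)"
  unfolding mass_def
  by (intro locally_lipschitz_on_mult locally_lipschitz_on_power2 locally_lipschitz_on_sum
      locally_lipschitz_on_exp locally_lipschitz_on_norm locally_lipschitz_on_diff locally_lipschitz_on_vec_nth
      locally_lipschitz_on_const locally_lipschitz_on_ident)

lemma locally_lipschitz_on_v_ms: "locally_lipschitz_on X (\<lambda>p. v_ms \<beta> \<sigma>1 q p i)"
proof -
  have "0 < (\<Sum>k\<in>UNIV. inverse (mass \<beta> q p k) * exp (- \<beta> * (norm (q k - p $ i))\<^sup>2))" for p
    by (intro sum_pos mult_pos_pos) (auto simp: mass_pos)
  then show ?thesis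
    unfolding v_ms_def Let_def
    by (intro locally_lipschitz_on_scaleR locally_lipschitz_on_power2 locally_lipschitz_on_divide
        locally_lipschitz_on_sum locally_lipschitz_on_mult locally_lipschitz_on_inverse locally_lipschitz_on_exp
        locally_lipschitz_on_norm locally_lipschitz_on_diff locally_lipschitz_on_vec_nth
        locally_lipschitz_on_mass locally_lipschitz_on_const locally_lipschitz_on_ident)
       (auto simp: mass_pos[THEN less_imp_neq, THEN not_sym] less_imp_neq[THEN not_sym])
qed

lemma v_rep_eq:
  "v_rep \<sigma>2 \<epsilon> r p i = \<sigma>2 *\<^sub>R (\<Sum>j\<in>UNIV. if j = i then 0 else
      (max (r - norm (p $ i - p $ j)) 0 / (norm (p $ i - p $ j) + \<epsilon>)) *\<^sub>R (p $ i - p $ j))"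
  unfolding v_rep_def by (rule arg_cong[where f = "scaleR \<sigma>2"], rule sum.mono_neutral_cong_left) auto

lemma locally_lipschitz_on_v_rep:
  fixes X :: "(real^'d^'n::finite) set"
  assumes "0 < \<epsilon>"
  shows "locally_lipschitz_on X (\<lambda>p. v_rep \<sigma>2 \<epsilon> r p i)"
  unfolding v_rep_eq
proof (intro locally_lipschitz_on_scaleR locally_lipschitz_on_const locally_lipschitz_on_sum)
  fix j
  have denominator_nonzero: "norm (p $ i - p $ j) + \<epsilon> \<noteq> 0" for p :: "real^'d^'n"
    using assms norm_ge_zero[of "p $ i - p $ j"] by linarith
  have "locally_lipschitz_on X (\<lambda>p.
      (max (r - norm (p $ i - p $ j)) 0 / (norm (p $ i - p $ j) + \<epsilon>)) *\<^sub>R (p $ i - p $ j))"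
    by (intro locally_lipschitz_on_scaleR locally_lipschitz_on_divide locally_lipschitz_on_max
        locally_lipschitz_on_add locally_lipschitz_on_diff locally_lipschitz_on_norm
        locally_lipschitz_on_vec_nth locally_lipschitz_on_const locally_lipschitz_on_ident
        denominator_nonzero)
  then show "locally_lipschitz_on X (\<lambda>p. if j = i then 0 else
      (max (r - norm (p $ i - p $ j)) 0 / (norm (p $ i - p $ j) + \<epsilon>)) *\<^sub>R (p $ i - p $ j))"
    by (cases "j = i") (simp_all add: locally_lipschitz_on_const)
qed

lemma sat_eq: "0 < v \<Longrightarrow> sat v z = (v / max (norm z) v) *\<^sub>R z"
  by (auto simp: sat_def max_def)

lemma locally_lipschitz_on_sat:
  assumes "0 < v" "locally_lipschitz_on X f"
  shows "locally_lipschitz_on X (\<lambda>x. sat v (f x))"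
  unfolding sat_eq[OF assms(1)]
  using assms
  by (intro locally_lipschitz_on_scaleR locally_lipschitz_on_divide locally_lipschitz_on_max
      locally_lipschitz_on_norm locally_lipschitz_on_const) auto

theorem lemma7:
  fixes q :: "'k::finite \<Rightarrow> real^'d"
    and \<beta> \<sigma>1 \<sigma>2 \<epsilon> r_avoid v_max :: real
    and i :: "'n::finite"
  assumes "CARD('n) \<ge> 2"
    and "\<beta> > 0" and "\<sigma>1 > 0" and "\<sigma>2 > 0"
    and "0 < \<epsilon>" and "\<epsilon> < 1"
    and "r_avoid > 0" and "v_max > 0"
  shows "locally_lipschitz_on (UNIV :: (real^'d^'n) set)
           (\<lambda>p. control \<beta> \<sigma>1 \<sigma>2 \<epsilon> r_avoid v_max q p i)"
  unfolding control_def v_cv_def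
  by (intro locally_lipschitz_on_sat locally_lipschitz_on_add locally_lipschitz_on_scaleR
      locally_lipschitz_on_kappa2 locally_lipschitz_on_v_ms locally_lipschitz_on_v_rep assms)

end
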